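(* Let $G$ be a finite group, let $n\ge1$, and let $\phi,\theta\in S_n$ be such that $\theta$ is obtained from $\phi$ by an $x$--$y$ cyclic operation for some $x,y\in\{0,1,\dots,n\}$. Then \[ Pr(a_1a_2\cdots a_n=a_{\phi_1}a_{\phi_2}\cdots a_{\phi_n})=Pr(a_1a_2\cdots a_n=a_{\theta_1}a_{\theta_2}\cdots a_{\theta_n}), \] where in both cases $a_1,\dots,a_n$ are independent and uniformly random elements of $G$.
   Context: Permutations are written in one-line notation $\phi=\langle\phi_1\dots\phi_n\rangle$, with $\phi_i=\phi(i)$; set $\phi_0=0$. The big black cycle of $\phi$ is the $(n+1)$-cycle $\phi^{\cdot}$ on $\{0,1,\dots,n\}$ defined by $\phi^{\cdot}(\phi_i)=\phi_{i-1}$ for $1\le i\le n$ and $\phi^{\cdot}(0)=\phi_n$. In cycle notation, $\phi^{\cdot}=(0,\phi_n,\phi_{n-1},\dots,\phi_1)$. We write $a\to b$ when $\phi^{\cdot}(a)=b$. Every $(n+1)$-cycle $(0,c_n,\dots,c_1)$ on $\{0,\dots,n\}$ is the big black cycle of exactly one permutation, namely $\langle c_1\dots c_n\rangle$. $x$--$y$ cyclic operation: suppose $\phi^{\cdot}$ contains $x+1\to y\to x$; when $x=n$ this condition reads $0\to y\to n$. Then $\theta$ is the permutation whose big black cycle $\theta^{\cdot}$ is obtained from $\phi^{\cdot}$ by relabeling its entries as follows. (i) If $x<n$ and $y>x+1$: the entry $x+1$ is replaced by $y-1$, each entry $t$ with $x+2\le t\le y-1$ is replaced by $t-1$, and all other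 entries are unchanged. (ii) If $y<x$: the entry $x$ is replaced by $y+1$, each entry $t$ with $y+1\le t\le x-1$ is replaced by $t+1$, and all other entries are unchanged. *)

theory Defs
  imports Complex_Main "HOL-Algebra.Group" "HOL-Combinatorics.Permutations"
begin

text \<open>Permutations of {1..n} are functions nat => nat permuting {1..n}; they fix 0,
  matching the convention phi_0 = 0.\<close>

text \<open>Big black cycle of phi, as a function on {0..n}: phi_i maps to phi_(i-1), 0 maps to phi_n.\<close>
definition bbc :: "nat \<Rightarrow> (nat \<Rightarrow> nat) \<Rightarrow> nat \<Rightarrow> nat" where
  "bbc n phi a = (if a = 0 then phi n else if a \<le> n then phi (inv_into UNIV phi a - 1) else a)"

definition succ_idx :: "nat \<Rightarrow> nat \<Rightarrow> nat" where
  "succ_idx n x = (if x = n then 0 else x + 1)"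

definition relabel :: "nat \<Rightarrow> nat \<Rightarrow> nat \<Rightarrow> nat" where
  "relabel x y t =
     (if x + 1 < y then
        (if t = x + 1 then y - 1 else if x + 2 \<le> t \<and> t \<le> y - 1 then t - 1 else t)
      else if y < x then
        (if t = x then y + 1 else if y + 1 \<le> t \<and> t \<le> x - 1 then t + 1 else t)
      else t)"

text \<open>theta is obtained from phi by the x--y cyclic operation: the precondition
  x+1 -> y -> x holds in the big black cycle of phi, we are in case (i) or (ii), and the
  big black cycle of theta is the relabeled big black cycle of phi (an entry t of the cycle
  of phi becomes relabel x y t, so a -> b in phi's cycle becomes relabel a -> relabel b).\<close>
definition cyclic_op :: "nat \<Rightarrow> nat \<Rightarrow> nat \<Rightarrow> (nat \<Rightarrow> nat) \<Rightarrow> (nat \<Rightarrow> nat) \<Rightarrow> bool" where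
  "cyclic_op n x y phi theta \<longleftrightarrow>
     x \<le> n \<and> y \<le> n \<and>
     bbc n phi (succ_idx n x) = y \<and> bbc n phi y = x \<and>
     ((x < n \<and> x + 1 < y) \<or> y < x) \<and>
     (\<forall>t\<in>{0..n}. bbc n theta (relabel x y t) = relabel x y (bbc n phi t))"

definition word_prod :: "('g, 'b) monoid_scheme \<Rightarrow> nat \<Rightarrow> (nat \<Rightarrow> 'g) \<Rightarrow> 'g" where
  "word_prod G n a = foldr (\<lambda>i acc. a i \<otimes>\<^bsub>G\<^esub> acc) [1..<Suc n] \<one>\<^bsub>G\<^esub>"

definition word_prob :: "('g, 'b) monoid_scheme \<Rightarrow> nat \<Rightarrow> (nat \<Rightarrow> nat) \<Rightarrow> real" where
  "word_prob G n phi =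
     real (card {a \<in> {1..n} \<rightarrow>\<^sub>E carrier G. word_prod G n a = word_prod G n (\<lambda>i. a (phi i))})
     / real (card (carrier G)) ^ n"

end

theory Submission
  imports Defs
begin

text \<open>Both probabilities count solutions in \<open>G\<^sup>n\<close> of a word equation whose left-hand
  side is the word \<open>1 2 \<dots> n\<close>. The condition \<open>x+1 \<rightarrow> y \<rightarrow> x\<close> says that \<open>x, y, x+1\<close> are
  consecutive in the cyclic word \<open>0 \<phi>\<^sub>1 \<dots> \<phi>\<^sub>n\<close>. Moving the letter \<open>x+1\<close> of the left-hand
  side to just before \<open>y\<close> (case (i)), or the letter \<open>x\<close> to just after \<open>y\<close> (case (ii)), does
  not change the number of solutions: in case (i), for instance, the substitution
  \<open>a\<^sub>x \<mapsto> a\<^sub>x a\<^sub>x\<^sub>+\<^sub>1\<close>, \<open>a\<^sub>y \<mapsto> a\<^sub>x\<^sub>+\<^sub>1\<inverse> a\<^sub>y\<close> is a bijection of \<open>G\<^sup>n\<close> that preserves the value of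
  the right-hand side \<open>\<dots> x y (x+1) \<dots>\<close> and carries the moved left-hand side to the original
  one. When the window wraps around \<open>0\<close>, the substitution instead multiplies both sides by a
  common factor. Renaming the variables by the relabeling of the cyclic operation finally turns
  the moved equation into the one for \<open>\<theta>\<close>.\<close>

section \<open>Words and their solutions in a group\<close>

definition word_eval :: "('g, 'b) monoid_scheme \<Rightarrow> (nat \<Rightarrow> 'g) \<Rightarrow> nat list \<Rightarrow> 'g" where
  "word_eval G a xs = foldr (\<lambda>i acc. a i \<otimes>\<^bsub>G\<^esub> acc) xs \<one>\<^bsub>G\<^esub>"

lemma word_eval_Nil [simp]: "word_eval G a [] = \<one>\<^bsub>G\<^esub>"
  by (simp add: word_eval_def)

lemma word_eval_Cons [simp]: "word_eval G a (i # xs) = a i \<otimes>\<^bsub>G\<^esub> word_eval G a xs"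
  by (simp add: word_eval_def)

lemma word_eval_cong: "(\<And>i. i \<in> set xs \<Longrightarrow> a i = b i) \<Longrightarrow> word_eval G a xs = word_eval G b xs"
  by (induction xs) auto

lemma word_eval_fun_upd [simp]: "v \<notin> set xs \<Longrightarrow> word_eval G (a(v := g)) xs = word_eval G a xs"
  by (rule word_eval_cong) auto

lemma word_eval_map: "word_eval G a (map f xs) = word_eval G (a \<circ> f) xs"
  by (induction xs) auto

lemma card_Collect_eq_by_bij:
  assumes F: "bij_betw F K K" and PQ: "\<And>a. a \<in> K \<Longrightarrow> P (F a) \<longleftrightarrow> Q a"
  shows "card {a \<in> K. P a} = card {a \<in> K. Q a}"
proof -
  have "F ` {a \<in> K. Q a} = {a \<in> K. P a}"
    using bij_betw_imp_surj_on[OF F] PQ by (auto simp: image_iff) (metis imageE)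
  moreover have "inj_on F {a \<in> K. Q a}"
    using bij_betw_imp_inj_on[OF F] by (rule inj_on_subset) auto
  ultimately show ?thesis
    by (metis card_image)
qed

lemma bij_betw_PiE_update:
  assumes "u \<in> N" "v \<in> N" "u \<noteq> v"
    and "\<And>g h. g \<in> C \<Longrightarrow> h \<in> C \<Longrightarrow> f g h \<in> C" "\<And>g h. g \<in> C \<Longrightarrow> h \<in> C \<Longrightarrow> f' g h \<in> C"
    and "\<And>g h. g \<in> C \<Longrightarrow> h \<in> C \<Longrightarrow> f' g (f g h) = h"
    and "\<And>g h. g \<in> C \<Longrightarrow> h \<in> C \<Longrightarrow> f g (f' g h) = h"
  shows "bij_betw (\<lambda>a. a(v := f (a u) (a v))) (N \<rightarrow>\<^sub>E C) (N \<rightarrow>\<^sub>E C)"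
  by (rule bij_betw_byWitness[where f' = "\<lambda>a. a(v := f' (a u) (a v))"])
    (use assms in \<open>auto simp: PiE_iff extensional_def\<close>)

lemma bij_betw_PiE_reindex:
  assumes "bij_betw r N N"
  shows "bij_betw (\<lambda>a. restrict (a \<circ> r) N) (N \<rightarrow>\<^sub>E C) (N \<rightarrow>\<^sub>E C)"
proof (rule bij_betw_byWitness[where f' = "\<lambda>a. restrict (a \<circ> inv_into N r) N"])
  have r: "r ` N = N" "inj_on r N"
    using assms by (auto simp: bij_betw_def)
  show "\<forall>a \<in> N \<rightarrow>\<^sub>E C. restrict (restrict (a \<circ> r) N \<circ> inv_into N r) N = a"
    using r by (auto simp: fun_eq_iff PiE_iff extensional_def inv_into_into f_inv_into_f)
  show "\<forall>a \<in> N \<rightarrow>\<^sub>E C. restrict (restrict (a \<circ> inv_into N r) N \<circ> r) N = a"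
    using r by (auto simp: fun_eq_iff PiE_iff extensional_def)
  show "(\<lambda>a. restrict (a \<circ> r) N) ` (N \<rightarrow>\<^sub>E C) \<subseteq> N \<rightarrow>\<^sub>E C"
    using r by (auto simp: PiE_iff image_subset_iff)
  show "(\<lambda>a. restrict (a \<circ> inv_into N r) N) ` (N \<rightarrow>\<^sub>E C) \<subseteq> N \<rightarrow>\<^sub>E C"
    using r by (auto simp: inv_into_into)
qed

definition solutions :: "('g, 'b) monoid_scheme \<Rightarrow> nat set \<Rightarrow> nat list \<Rightarrow> nat list \<Rightarrow> (nat \<Rightarrow> 'g) set" where
  "solutions G N S T = {a \<in> N \<rightarrow>\<^sub>E carrier G. word_eval G a S = word_eval G a T}"

abbreviation perm_solutions :: "('g, 'b) monoid_scheme \<Rightarrow> nat \<Rightarrow> (nat \<Rightarrow> nat) \<Rightarrow> (nat \<Rightarrow> 'g) set" where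
  "perm_solutions G n \<phi> \<equiv> solutions G {1..n} [1..<Suc n] (map \<phi> [1..<Suc n])"

context group
begin

lemma word_eval_closed: "a \<in> N \<rightarrow>\<^sub>E carrier G \<Longrightarrow> set xs \<subseteq> N \<Longrightarrow> word_eval G a xs \<in> carrier G"
  by (induction xs) auto

lemma word_eval_append:
  "a \<in> N \<rightarrow>\<^sub>E carrier G \<Longrightarrow> set xs \<subseteq> N \<Longrightarrow> set ys \<subseteq> N
    \<Longrightarrow> word_eval G a (xs @ ys) = word_eval G a xs \<otimes> word_eval G a ys"
proof (induction xs)
  case (Cons i xs)
  then have "a i \<in> carrier G" by auto
  with Cons show ?case by (simp add: m_assoc word_eval_closed)
qed (simp add: word_eval_closed)

lemma mult_inv_cancel_left [simp]: "x \<in> carrier G \<Longrightarrow> y \<in> carrier G \<Longrightarrow> x \<otimes> (inv x \<otimes> y) = y"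
  by (simp add: m_assoc [symmetric])

lemma inv_mult_cancel_left [simp]: "x \<in> carrier G \<Longrightarrow> y \<in> carrier G \<Longrightarrow> inv x \<otimes> (x \<otimes> y) = y"
  by (simp add: m_assoc [symmetric])

lemma bij_betw_update_mult:
  assumes "u \<in> N" "v \<in> N" "u \<noteq> v"
  shows bij_betw_update_mult_left: "bij_betw (\<lambda>a. a(v := a u \<otimes> a v)) (N \<rightarrow>\<^sub>E carrier G) (N \<rightarrow>\<^sub>E carrier G)"
    and bij_betw_update_inv_mult_left: "bij_betw (\<lambda>a. a(v := inv (a u) \<otimes> a v)) (N \<rightarrow>\<^sub>E carrier G) (N \<rightarrow>\<^sub>E carrier G)"
    and bij_betw_update_mult_right: "bij_betw (\<lambda>a. a(v := a v \<otimes> a u)) (N \<rightarrow>\<^sub>E carrier G) (N \<rightarrow>\<^sub>E carrier G)"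
    and bij_betw_update_mult_inv_right: "bij_betw (\<lambda>a. a(v := a v \<otimes> inv (a u))) (N \<rightarrow>\<^sub>E carrier G) (N \<rightarrow>\<^sub>E carrier G)"
proof -
  show "bij_betw (\<lambda>a. a(v := a u \<otimes> a v)) (N \<rightarrow>\<^sub>E carrier G) (N \<rightarrow>\<^sub>E carrier G)"
    by (rule bij_betw_PiE_update[OF assms, where f' = "\<lambda>g h. inv g \<otimes> h"]) simp_all
  show "bij_betw (\<lambda>a. a(v := inv (a u) \<otimes> a v)) (N \<rightarrow>\<^sub>E carrier G) (N \<rightarrow>\<^sub>E carrier G)"
    by (rule bij_betw_PiE_update[OF assms, where f' = "\<lambda>g h. g \<otimes> h"]) simp_all
  show "bij_betw (\<lambda>a. a(v := a v \<otimes> a u)) (N \<rightarrow>\<^sub>E carrier G) (N \<rightarrow>\<^sub>E carrier G)"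
    by (rule bij_betw_PiE_update[OF assms, where f' = "\<lambda>g h. h \<otimes> inv g"]) (simp_all add: m_assoc)
  show "bij_betw (\<lambda>a. a(v := a v \<otimes> inv (a u))) (N \<rightarrow>\<^sub>E carrier G) (N \<rightarrow>\<^sub>E carrier G)"
    by (rule bij_betw_PiE_update[OF assms, where f' = "\<lambda>g h. h \<otimes> g"]) (simp_all add: m_assoc)
qed

lemma card_solutions_eq_by_bij:
  assumes "bij_betw F (N \<rightarrow>\<^sub>E carrier G) (N \<rightarrow>\<^sub>E carrier G)"
    and "\<And>a. a \<in> N \<rightarrow>\<^sub>E carrier G \<Longrightarrow>
      word_eval G (F a) S' = word_eval G (F a) T' \<longleftrightarrow> word_eval G a S = word_eval G a T"
  shows "card (solutions G N S T) = card (solutions G N S' T')"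
  using card_Collect_eq_by_bij[OF assms(1), of "\<lambda>a. word_eval G a S' = word_eval G a T'"] assms(2)
  by (simp add: solutions_def)

lemma card_solutions_move_right:
  assumes S: "S = A @ [w, u] @ B @ [v] @ C" and T: "T = D @ [w, v, u] @ E"
    and "distinct S" "distinct T" "set S \<subseteq> N" "set T \<subseteq> N"
  shows "card (solutions G N S T) = card (solutions G N (A @ [w] @ B @ [u, v] @ C) T)"
  unfolding S T
proof (rule card_solutions_eq_by_bij)
  let ?K = "N \<rightarrow>\<^sub>E carrier G"
  have dS: "distinct (A @ [w, u] @ B @ [v] @ C)" and dT: "distinct (D @ [w, v, u] @ E)"
    and N: "set A \<subseteq> N" "set B \<subseteq> N" "set C \<subseteq> N" "set D \<subseteq> N" "set E \<subseteq> N" "u \<in> N" "v \<in> N" "w \<in> N"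
    using assms(3-6) unfolding S T by auto
  let ?F = "(\<lambda>a. a(v := inv (a u) \<otimes> a v)) \<circ> (\<lambda>a. a(w := a w \<otimes> a u))"
  show F: "bij_betw ?F ?K ?K"
    using dS N by (auto intro!: bij_betw_trans[where B = ?K] bij_betw_update_mult_right bij_betw_update_inv_mult_left)
  fix a assume a: "a \<in> ?K"
  let ?b = "a(w := a w \<otimes> a u, v := inv (a u) \<otimes> a v)"
  have b: "?b \<in> ?K" using bij_betwE[OF F] a dS by auto
  have [simp]: "a i \<in> carrier G" if "i \<in> N" for i using a that by auto
  have "word_eval G ?b (A @ [w] @ B @ [u, v] @ C) = word_eval G a (A @ [w, u] @ B @ [v] @ C)"
    and "word_eval G ?b (D @ [w, v, u] @ E) = word_eval G a (D @ [w, v, u] @ E)"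
    using dS dT by (simp_all add: word_eval_append[OF a] word_eval_append[OF b] N word_eval_closed[OF a] m_assoc)
  then show "word_eval G (?F a) (A @ [w] @ B @ [u, v] @ C) = word_eval G (?F a) (D @ [w, v, u] @ E)
    \<longleftrightarrow> word_eval G a (A @ [w, u] @ B @ [v] @ C) = word_eval G a (D @ [w, v, u] @ E)"
    using dS by simp
qed

lemma card_solutions_move_right_from_front:
  assumes S: "S = [u] @ B @ [v] @ C" and T: "T = [v, u] @ E"
    and "distinct S" "distinct T" "set S \<subseteq> N" "set T \<subseteq> N"
  shows "card (solutions G N S T) = card (solutions G N (B @ [u, v] @ C) T)"
  unfolding S T
proof (rule card_solutions_eq_by_bij)
  let ?K = "N \<rightarrow>\<^sub>E carrier G"
  let ?F = "\<lambda>a. a(v := inv (a u) \<otimes> a v)"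
  have dS: "distinct ([u] @ B @ [v] @ C)" and dT: "distinct ([v, u] @ E)"
    and N: "set B \<subseteq> N" "set C \<subseteq> N" "set E \<subseteq> N" "u \<in> N" "v \<in> N"
    using assms(3-6) unfolding S T by auto
  show F: "bij_betw ?F ?K ?K"
    using dS N by (auto intro!: bij_betw_update_inv_mult_left)
  fix a assume a: "a \<in> ?K"
  have b: "?F a \<in> ?K" using bij_betwE[OF F] a by blast
  have [simp]: "a i \<in> carrier G" if "i \<in> N" for i using a that by auto
  have "word_eval G a ([u] @ B @ [v] @ C) = a u \<otimes> word_eval G (?F a) (B @ [u, v] @ C)"
    and "word_eval G a ([v, u] @ E) = a u \<otimes> word_eval G (?F a) ([v, u] @ E)"
    using dS dT by (simp_all add: word_eval_append[OF a] word_eval_append[OF b] N word_eval_closed[OF a] m_assoc)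
  then show "word_eval G (?F a) (B @ [u, v] @ C) = word_eval G (?F a) ([v, u] @ E)
    \<longleftrightarrow> word_eval G a ([u] @ B @ [v] @ C) = word_eval G a ([v, u] @ E)"
    by (simp add: word_eval_closed[OF b] N)
qed

lemma card_solutions_move_left:
  assumes S: "S = A @ [v] @ B @ [w, z] @ C" and T: "T = D @ [w, v, z] @ E"
    and "distinct S" "distinct T" "set S \<subseteq> N" "set T \<subseteq> N"
  shows "card (solutions G N S T) = card (solutions G N (A @ [v, w] @ B @ [z] @ C) T)"
  unfolding S T
proof (rule card_solutions_eq_by_bij)
  let ?K = "N \<rightarrow>\<^sub>E carrier G"
  let ?F = "(\<lambda>a. a(z := a w \<otimes> a z)) \<circ> (\<lambda>a. a(v := a v \<otimes> inv (a w)))"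
  have dS: "distinct (A @ [v] @ B @ [w, z] @ C)" and dT: "distinct (D @ [w, v, z] @ E)"
    and N: "set A \<subseteq> N" "set B \<subseteq> N" "set C \<subseteq> N" "set D \<subseteq> N" "set E \<subseteq> N" "v \<in> N" "w \<in> N" "z \<in> N"
    using assms(3-6) unfolding S T by auto
  show F: "bij_betw ?F ?K ?K"
    using dS N by (auto intro!: bij_betw_trans[where B = ?K] bij_betw_update_mult_left bij_betw_update_mult_inv_right)
  fix a assume a: "a \<in> ?K"
  let ?b = "a(v := a v \<otimes> inv (a w), z := a w \<otimes> a z)"
  have b: "?b \<in> ?K" using bij_betwE[OF F] a dS by auto
  have [simp]: "a i \<in> carrier G" if "i \<in> N" for i using a that by auto
  have "word_eval G ?b (A @ [v, w] @ B @ [z] @ C) = word_eval G a (A @ [v] @ B @ [w, z] @ C)"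
    and "word_eval G ?b (D @ [w, v, z] @ E) = word_eval G a (D @ [w, v, z] @ E)"
    using dS dT by (simp_all add: word_eval_append[OF a] word_eval_append[OF b] N word_eval_closed[OF a] m_assoc)
  then show "word_eval G (?F a) (A @ [v, w] @ B @ [z] @ C) = word_eval G (?F a) (D @ [w, v, z] @ E)
    \<longleftrightarrow> word_eval G a (A @ [v] @ B @ [w, z] @ C) = word_eval G a (D @ [w, v, z] @ E)"
    using dS by simp
qed

lemma card_solutions_move_left_from_back:
  assumes S: "S = A @ [v] @ B @ [w]" and T: "T = D @ [w, v]"
    and "distinct S" "distinct T" "set S \<subseteq> N" "set T \<subseteq> N"
  shows "card (solutions G N S T) = card (solutions G N (A @ [v, w] @ B) T)"
  unfolding S T
proof (rule card_solutions_eq_by_bij)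
  let ?K = "N \<rightarrow>\<^sub>E carrier G"
  let ?F = "\<lambda>a. a(v := a v \<otimes> inv (a w))"
  have dS: "distinct (A @ [v] @ B @ [w])" and dT: "distinct (D @ [w, v])"
    and N: "set A \<subseteq> N" "set B \<subseteq> N" "set D \<subseteq> N" "v \<in> N" "w \<in> N"
    using assms(3-6) unfolding S T by auto
  show F: "bij_betw ?F ?K ?K"
    using dS N by (auto intro!: bij_betw_update_mult_inv_right)
  fix a assume a: "a \<in> ?K"
  have b: "?F a \<in> ?K" using bij_betwE[OF F] a by blast
  have [simp]: "a i \<in> carrier G" if "i \<in> N" for i using a that by auto
  have "word_eval G a (A @ [v] @ B @ [w]) = word_eval G (?F a) (A @ [v, w] @ B) \<otimes> a w"
    and "word_eval G a (D @ [w, v]) = word_eval G (?F a) (D @ [w, v]) \<otimes> a w"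
    using dS dT by (simp_all add: word_eval_append[OF a] word_eval_append[OF b] N word_eval_closed[OF a] m_assoc)
  then show "word_eval G (?F a) (A @ [v, w] @ B) = word_eval G (?F a) (D @ [w, v])
    \<longleftrightarrow> word_eval G a (A @ [v] @ B @ [w]) = word_eval G a (D @ [w, v])"
    by (simp add: word_eval_closed[OF b] N)
qed

lemma card_solutions_move_to_front:
  assumes S: "S = B @ [w, z] @ C" and T: "T = [z] @ M @ [w]"
    and "distinct S" "distinct T" "set S \<subseteq> N" "set T \<subseteq> N"
  shows "card (solutions G N S T) = card (solutions G N ([w] @ B @ [z] @ C) T)"
  unfolding S T
proof (rule card_solutions_eq_by_bij)
  let ?K = "N \<rightarrow>\<^sub>E carrier G"
  let ?F = "\<lambda>a. a(z := a w \<otimes> a z)"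
  have dS: "distinct (B @ [w, z] @ C)" and dT: "distinct ([z] @ M @ [w])"
    and N: "set B \<subseteq> N" "set C \<subseteq> N" "set M \<subseteq> N" "w \<in> N" "z \<in> N"
    using assms(3-6) unfolding S T by auto
  show F: "bij_betw ?F ?K ?K"
    using dS N by (auto intro!: bij_betw_update_mult_left)
  fix a assume a: "a \<in> ?K"
  have b: "?F a \<in> ?K" using bij_betwE[OF F] a by blast
  have [simp]: "a i \<in> carrier G" if "i \<in> N" for i using a that by auto
  have "word_eval G (?F a) ([w] @ B @ [z] @ C) = a w \<otimes> word_eval G a (B @ [w, z] @ C)"
    and "word_eval G (?F a) ([z] @ M @ [w]) = a w \<otimes> word_eval G a ([z] @ M @ [w])"
    using dS dT by (simp_all add: word_eval_append[OF a] word_eval_append[OF b] N word_eval_closed[OF a] m_assoc)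
  then show "word_eval G (?F a) ([w] @ B @ [z] @ C) = word_eval G (?F a) ([z] @ M @ [w])
    \<longleftrightarrow> word_eval G a (B @ [w, z] @ C) = word_eval G a ([z] @ M @ [w])"
    by (simp add: word_eval_closed[OF a] N)
qed

lemma card_solutions_map:
  assumes r: "bij_betw r N N" and "set S \<subseteq> N" "set T \<subseteq> N"
  shows "card (solutions G N (map r S) (map r T)) = card (solutions G N S T)"
proof (rule card_solutions_eq_by_bij)
  show "bij_betw (\<lambda>a. restrict (a \<circ> r) N) (N \<rightarrow>\<^sub>E carrier G) (N \<rightarrow>\<^sub>E carrier G)"
    using r by (rule bij_betw_PiE_reindex)
  have "word_eval G (restrict (a \<circ> r) N) X = word_eval G a (map r X)" if "set X \<subseteq> N" for a X
    unfolding word_eval_map by (rule word_eval_cong) (use that in auto)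
  then show "word_eval G (restrict (a \<circ> r) N) S = word_eval G (restrict (a \<circ> r) N) T
    \<longleftrightarrow> word_eval G a (map r S) = word_eval G a (map r T)" for a
    using assms(2,3) by simp
qed

end

section \<open>One-line notation and the big black cycle\<close>

lemma permutes_eq_zero_iff:
  fixes \<phi> :: "nat \<Rightarrow> nat"
  assumes "\<phi> permutes {1..n}"
  shows "\<phi> k = 0 \<longleftrightarrow> k = 0"
proof -
  have "\<phi> 0 = 0"
    by (rule permutes_not_in[OF assms]) auto
  then show ?thesis
    using injD[OF permutes_inj[OF assms], of k 0] by auto
qed

lemma permutes_one_line_distinct: "(\<phi> :: nat \<Rightarrow> nat) permutes {1..n} \<Longrightarrow> distinct (map \<phi> [1..<Suc n])"
  by (simp add: distinct_map permutes_inj_on)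

lemma permutes_one_line_set: "(\<phi> :: nat \<Rightarrow> nat) permutes {1..n} \<Longrightarrow> set (map \<phi> [1..<Suc n]) = {1..n}"
  by (simp only: set_map set_upt atLeastLessThanSuc_atLeastAtMost permutes_image)

lemma bbc_one_line:
  fixes \<phi> :: "nat \<Rightarrow> nat"
  assumes "\<phi> permutes {1..n}" and "i \<in> {1..n}"
  shows "bbc n \<phi> (\<phi> i) = \<phi> (i - 1)"
proof -
  have "\<phi> i \<in> {1..n}"
    using permutes_in_image[OF assms(1)] assms(2) by (simp only:)
  then show ?thesis
    using permutes_inj[OF assms(1)] by (simp add: bbc_def)
qed

lemma relabel_zero [simp]: "relabel x y 0 = 0"
  by (simp add: relabel_def)

lemma cyclic_op_one_line:
  fixes \<phi> \<theta> :: "nat \<Rightarrow> nat"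
  assumes op: "cyclic_op n x y \<phi> \<theta>" and \<phi>: "\<phi> permutes {1..n}" and \<theta>: "\<theta> permutes {1..n}"
    and i: "i \<in> {1..n}"
  shows "\<theta> i = relabel x y (\<phi> i)"
proof -
  let ?r = "relabel x y"
  have rel: "bbc n \<theta> (?r t) = ?r (bbc n \<phi> t)" if "t \<le> n" for t
    using op that by (simp add: cyclic_op_def)
  from i have "i \<le> n" by simp
  \<comment> \<open>the cycle of \<open>\<theta>\<close> determines \<open>\<theta> n\<close> as the image of \<open>0\<close>, and \<open>\<theta> i\<close> from \<open>\<theta> (i + 1)\<close>\<close>
  then show ?thesis
  proof (induction rule: inc_induct)
    case base
    show ?case using rel[of 0] by (simp add: bbc_def)
  next
    case (step m)
    have m: "m \<in> {1..n}" "Suc m \<in> {1..n}" "\<phi> (Suc m) \<le> n"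
      using step.hyps i permutes_in_image[OF \<phi>, of "Suc m"] by auto
    have "\<theta> m = bbc n \<theta> (\<theta> (Suc m))" using bbc_one_line[OF \<theta> m(2)] by simp
    also have "\<dots> = ?r (bbc n \<phi> (\<phi> (Suc m)))" using step.IH rel[OF m(3)] by simp
    also have "\<dots> = ?r (\<phi> m)" using bbc_one_line[OF \<phi> m(2)] by simp
    finally show ?case .
  qed
qed

lemma upt_append: "i \<le> j \<Longrightarrow> j \<le> k \<Longrightarrow> [i..<j] @ [j..<k] = [i..<k]"
  using upt_add_eq_append[of i j "k - j"] by simp

lemma upt_append_assoc: "i \<le> j \<Longrightarrow> j \<le> k \<Longrightarrow> [i..<j] @ [j..<k] @ zs = [i..<k] @ zs"
  by (simp add: upt_append flip: append_assoc)

lemmas upt_merge = upt_conv_Cons [symmetric] upt_Suc_append [symmetric] upt_append upt_append_assoc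

lemma map_upt_id: "(\<And>t. p \<le> t \<Longrightarrow> t < q \<Longrightarrow> f t = t) \<Longrightarrow> map f [p..<q] = [p..<q]"
  by (rule map_idI) simp

lemma map_upt_shift_up:
  assumes "\<And>t. p \<le> t \<Longrightarrow> t < q \<Longrightarrow> f t = Suc t"
  shows "map f [p..<q] = [Suc p..<Suc q]"
proof -
  have "map f [p..<q] = map Suc [p..<q]"
    by (rule map_cong) (simp_all add: assms)
  then show ?thesis
    by (simp only: map_Suc_upt)
qed

lemma map_upt_shift_down:
  assumes "\<And>t. Suc p \<le> t \<Longrightarrow> t < Suc q \<Longrightarrow> f t = t - 1"
  shows "map f [Suc p..<Suc q] = [p..<q]"
proof -
  have "map f [Suc p..<Suc q] = map (f \<circ> Suc) [p..<q]"
    by (simp only: map_Suc_upt [symmetric] map_map)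
  also have "\<dots> = [p..<q]"
    by (rule map_idI) (simp add: assms)
  finally show ?thesis .
qed

lemma one_line_window:
  fixes \<phi> :: "nat \<Rightarrow> nat"
  assumes \<phi>: "\<phi> permutes {1..n}" and c: "c \<in> {1..n}"
    and "bbc n \<phi> c = b" "bbc n \<phi> b = a" "a \<noteq> 0" "b \<noteq> 0"
  obtains i where "3 \<le> i" "i \<le> n"
    "map \<phi> [1..<Suc n] = map \<phi> [1..<i - 2] @ [a, b, c] @ map \<phi> [Suc i..<Suc n]"
proof -
  have "c \<in> \<phi> ` {1..n}"
    using c permutes_image[OF \<phi>] by simp
  then obtain i where i: "i \<in> {1..n}" "\<phi> i = c"
    by blast
  have b: "\<phi> (i - 1) = b"
    using bbc_one_line[OF \<phi> i(1)] assms(3) i(2) by simp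
  then have i1: "i - 1 \<in> {1..n}"
    using permutes_eq_zero_iff[OF \<phi>, of "i - 1"] \<open>b \<noteq> 0\<close> i(1) by auto
  then have a: "\<phi> (i - 2) = a"
    using bbc_one_line[OF \<phi> i1] assms(4) b by (simp add: numeral_2_eq_2)
  then have "3 \<le> i"
    using permutes_eq_zero_iff[OF \<phi>, of "i - 2"] \<open>a \<noteq> 0\<close> i1 by simp
  have "[i - 2..<Suc n] = [i - 2, i - 1, i] @ [Suc i..<Suc n]"
    using \<open>3 \<le> i\<close> i(1) by (simp add: upt_conv_Cons numeral_2_eq_2 Suc_diff_Suc)
  then have "[1..<Suc n] = [1..<i - 2] @ [i - 2, i - 1, i] @ [Suc i..<Suc n]"
    using upt_append[of 1 "i - 2" "Suc n"] \<open>3 \<le> i\<close> i(1) by simp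
  then have "map \<phi> [1..<Suc n] = map \<phi> [1..<i - 2] @ [a, b, c] @ map \<phi> [Suc i..<Suc n]"
    using a b i(2) by simp
  then show ?thesis
    using that \<open>3 \<le> i\<close> i(1) by simp
qed

lemma one_line_window_start:
  fixes \<phi> :: "nat \<Rightarrow> nat"
  assumes \<phi>: "\<phi> permutes {1..n}" and "1 \<le> n"
    and "bbc n \<phi> 1 = b" "bbc n \<phi> b = 0" "b \<noteq> 0"
  shows "map \<phi> [1..<Suc n] = [b, 1] @ map \<phi> [3..<Suc n]"
proof -
  have "1 \<in> \<phi> ` {1..n}"
    using assms(2) permutes_image[OF \<phi>] by simp
  then obtain i where i: "i \<in> {1..n}" "\<phi> i = 1"
    by (metis imageE)
  have b: "\<phi> (i - 1) = b"
    using bbc_one_line[OF \<phi> i(1)] assms(3) i(2) by simp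
  then have i1: "i - 1 \<in> {1..n}"
    using permutes_eq_zero_iff[OF \<phi>, of "i - 1"] \<open>b \<noteq> 0\<close> i(1) by auto
  then have "\<phi> (i - 2) = 0"
    using bbc_one_line[OF \<phi> i1] assms(4) b by (simp add: numeral_2_eq_2)
  then have "i = 2"
    using permutes_eq_zero_iff[OF \<phi>, of "i - 2"] i1 by auto
  then have "[1..<Suc n] = [1, 2] @ [3..<Suc n]"
    using i(1) by (simp del: upt_Suc add: upt_merge numeral_2_eq_2 numeral_3_eq_3)
  then show ?thesis
    using i b \<open>i = 2\<close> by simp
qed

lemma one_line_window_end:
  fixes \<phi> :: "nat \<Rightarrow> nat"
  assumes \<phi>: "\<phi> permutes {1..n}" and "\<phi> n = b" "bbc n \<phi> b = n" "b \<noteq> 0"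
  shows "map \<phi> [1..<Suc n] = map \<phi> [1..<n - 1] @ [n, b]"
proof -
  have "n \<in> {1..n}"
    using permutes_eq_zero_iff[OF \<phi>, of n] assms(2,4) by simp
  then have "\<phi> (n - 1) = n"
    using bbc_one_line[OF \<phi> \<open>n \<in> {1..n}\<close>] assms(2,3) by simp
  then have "2 \<le> n"
    using permutes_eq_zero_iff[OF \<phi>, of "n - 1"] \<open>n \<in> {1..n}\<close> by auto
  then have "[1..<Suc n] = [1..<n - 1] @ [n - 1, n]"
    using upt_append[of 1 "n - 1" "Suc n"] by (simp add: upt_conv_Cons)
  then show ?thesis
    using \<open>\<phi> (n - 1) = n\<close> assms(2) by simp
qed

lemma one_line_window_wrap:
  fixes \<phi> :: "nat \<Rightarrow> nat"
  assumes \<phi>: "\<phi> permutes {1..n}" and "2 \<le> n" and c: "c \<in> {1..n}"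
    and "bbc n \<phi> c = 0" "\<phi> n = a"
  shows "map \<phi> [1..<Suc n] = [c] @ map \<phi> [2..<n] @ [a]"
proof -
  have "c \<in> \<phi> ` {1..n}"
    using c permutes_image[OF \<phi>] by simp
  then obtain i where i: "i \<in> {1..n}" "\<phi> i = c"
    by blast
  have "\<phi> (i - 1) = 0"
    using bbc_one_line[OF \<phi> i(1)] assms(4) i(2) by simp
  then have "i = 1"
    using permutes_eq_zero_iff[OF \<phi>, of "i - 1"] i(1) by simp
  have "[1..<Suc n] = [1] @ [2..<n] @ [n]"
    using assms(2) by (simp del: upt_Suc add: upt_merge numeral_2_eq_2)
  then show ?thesis
    using i \<open>i = 1\<close> assms(5) by simp
qed

section \<open>The cyclic operation\<close>

context group
begin

lemma card_perm_solutions_relabel: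
  fixes \<phi> \<theta> r :: "nat \<Rightarrow> nat"
  assumes \<phi>: "\<phi> permutes {1..n}" and \<theta>: "\<And>i. i \<in> {1..n} \<Longrightarrow> \<theta> i = r (\<phi> i)"
    and rS: "map r S = [1..<Suc n]" and S: "set S = {1..n}"
  shows "card (perm_solutions G n \<theta>) = card (solutions G {1..n} S (map \<phi> [1..<Suc n]))"
proof -
  have "r ` {1..n} = {1..n}"
    using arg_cong[OF rS, of set] S by (simp only: set_map set_upt atLeastLessThanSuc_atLeastAtMost)
  then have r: "bij_betw r {1..n} {1..n}"
    by (simp add: bij_betw_def eq_card_imp_inj_on)
  have "map \<theta> [1..<Suc n] = map r (map \<phi> [1..<Suc n])"
    unfolding map_map by (rule map_cong[OF refl]) (auto intro: \<theta>)
  then have "card (perm_solutions G n \<theta>) = card (solutions G {1..n} (map r S) (map r (map \<phi> [1..<Suc n])))"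
    by (simp only: rS)
  also have "\<dots> = card (solutions G {1..n} S (map \<phi> [1..<Suc n]))"
    by (rule card_solutions_map[OF r]) (simp_all only: S permutes_one_line_set[OF \<phi>] order_refl)
  finally show ?thesis .
qed

lemma card_perm_solutions_cyclic_op_i:
  fixes \<phi> \<theta> :: "nat \<Rightarrow> nat"
  assumes op: "cyclic_op n x y \<phi> \<theta>" and \<phi>: "\<phi> permutes {1..n}" and "\<theta> permutes {1..n}"
    and "0 < x" "x + 1 < y"
  shows "card (perm_solutions G n \<phi>) = card (perm_solutions G n \<theta>)"
proof -
  let ?r = "relabel x y"
  have \<theta>: "\<And>i. i \<in> {1..n} \<Longrightarrow> \<theta> i = ?r (\<phi> i)"
    by (rule cyclic_op_one_line[OF op \<phi> assms(3)])
  have xy: "1 \<le> x" "Suc x < y" "y \<le> n" and window: "bbc n \<phi> (Suc x) = y" "bbc n \<phi> y = x"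
    using op assms(4,5) by (auto simp: cyclic_op_def succ_idx_def)
  have "Suc x \<in> {1..n}" "x \<noteq> 0" "y \<noteq> 0"
    using xy by auto
  then obtain i where T: "map \<phi> [1..<Suc n] = map \<phi> [1..<i - 2] @ [x, y, Suc x] @ map \<phi> [Suc i..<Suc n]"
    using one_line_window[OF \<phi> _ window] by blast
  obtain y' where y': "y = Suc y'" using xy by (cases y) auto
  have S: "[1..<Suc n] = [1..<x] @ [x, Suc x] @ [Suc (Suc x)..<y] @ [y] @ [Suc y..<Suc n]"
    using xy by (simp del: upt_Suc add: upt_merge)
  define S' where "S' = [1..<x] @ [x] @ [Suc (Suc x)..<y] @ [Suc x, y] @ [Suc y..<Suc n]"
  have "map ?r [1..<x] = [1..<x]"
    by (rule map_upt_id) (use xy in \<open>auto simp: relabel_def\<close>)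
  moreover have "map ?r [Suc y..<Suc n] = [Suc y..<Suc n]"
    by (rule map_upt_id) (use xy in \<open>auto simp: relabel_def\<close>)
  moreover have "map ?r [Suc (Suc x)..<y] = [Suc x..<y']" unfolding y'
    by (rule map_upt_shift_down) (use xy y' in \<open>auto simp: relabel_def\<close>)
  moreover have "?r x = x" "?r (Suc x) = y'" "?r y = y" using xy y' by (auto simp: relabel_def)
  ultimately have "map ?r S' = [1..<x] @ [x] @ [Suc x..<y'] @ [y', y] @ [Suc y..<Suc n]"
    unfolding S'_def by simp
  also have "\<dots> = [1..<Suc n]"
    using xy y' by (simp del: upt_Suc add: upt_merge)
  finally have rS: "map ?r S' = [1..<Suc n]" .
  have "set S' = {1..n}"
    using arg_cong[OF S, of set] unfolding S'_def
    by (simp only: set_append list.set set_upt atLeastLessThanSuc_atLeastAtMost) blast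
  have "card (perm_solutions G n \<phi>) = card (solutions G {1..n} S' (map \<phi> [1..<Suc n]))"
    unfolding S'_def by (rule card_solutions_move_right[OF S T])
      (simp_all only: distinct_upt permutes_one_line_distinct[OF \<phi>] permutes_one_line_set[OF \<phi>]
        set_upt atLeastLessThanSuc_atLeastAtMost order_refl)
  also have "\<dots> = card (perm_solutions G n \<theta>)"
    using card_perm_solutions_relabel[OF \<phi> \<theta> rS \<open>set S' = {1..n}\<close>] by simp
  finally show ?thesis .
qed

lemma card_perm_solutions_cyclic_op_i_start:
  fixes \<phi> \<theta> :: "nat \<Rightarrow> nat"
  assumes op: "cyclic_op n x y \<phi> \<theta>" and \<phi>: "\<phi> permutes {1..n}" and "\<theta> permutes {1..n}"
    and "x = 0" "x + 1 < y"
  shows "card (perm_solutions G n \<phi>) = card (perm_solutions G n \<theta>)"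
proof -
  let ?r = "relabel 0 y"
  have \<theta>: "\<And>i. i \<in> {1..n} \<Longrightarrow> \<theta> i = ?r (\<phi> i)"
    using cyclic_op_one_line[OF op \<phi> assms(3)] assms(4) by simp
  have y: "Suc 0 < y" "y \<le> n" and window: "bbc n \<phi> 1 = y" "bbc n \<phi> y = 0"
    using op assms(4,5) by (auto simp: cyclic_op_def succ_idx_def)
  have T: "map \<phi> [1..<Suc n] = [y, 1] @ map \<phi> [3..<Suc n]"
    using one_line_window_start[OF \<phi> _ window] y by simp
  obtain y' where y': "y = Suc y'" using y by (cases y) auto
  have S: "[1..<Suc n] = [1] @ [2..<y] @ [y] @ [Suc y..<Suc n]"
    using y by (simp del: upt_Suc add: upt_merge numeral_2_eq_2)
  define S' where "S' = [2..<y] @ [1, y] @ [Suc y..<Suc n]"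
  have "map ?r [Suc y..<Suc n] = [Suc y..<Suc n]"
    by (rule map_upt_id) (use y in \<open>auto simp: relabel_def\<close>)
  moreover have "map ?r [2..<y] = [1..<y']" unfolding y' numeral_2_eq_2 One_nat_def
    by (rule map_upt_shift_down) (use y y' in \<open>auto simp: relabel_def\<close>)
  moreover have "?r 1 = y'" "?r y = y" using y y' by (auto simp: relabel_def)
  ultimately have "map ?r S' = [1..<y'] @ [y', y] @ [Suc y..<Suc n]"
    unfolding S'_def by simp
  also have "\<dots> = [1..<Suc n]"
    using y y' by (simp del: upt_Suc add: upt_merge)
  finally have rS: "map ?r S' = [1..<Suc n]" .
  have "set S' = {1..n}"
    using arg_cong[OF S, of set] unfolding S'_def
    by (simp only: set_append list.set set_upt atLeastLessThanSuc_atLeastAtMost) blast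
  have "card (perm_solutions G n \<phi>) = card (solutions G {1..n} S' (map \<phi> [1..<Suc n]))"
    unfolding S'_def by (rule card_solutions_move_right_from_front[OF S T])
      (simp_all only: distinct_upt permutes_one_line_distinct[OF \<phi>] permutes_one_line_set[OF \<phi>]
        set_upt atLeastLessThanSuc_atLeastAtMost order_refl)
  also have "\<dots> = card (perm_solutions G n \<theta>)"
    using card_perm_solutions_relabel[OF \<phi> \<theta> rS \<open>set S' = {1..n}\<close>] by simp
  finally show ?thesis .
qed

lemma card_perm_solutions_cyclic_op_ii:
  fixes \<phi> \<theta> :: "nat \<Rightarrow> nat"
  assumes op: "cyclic_op n x y \<phi> \<theta>" and \<phi>: "\<phi> permutes {1..n}" and "\<theta> permutes {1..n}"
    and xy: "0 < y" "y < x" "x < n"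
  shows "card (perm_solutions G n \<phi>) = card (perm_solutions G n \<theta>)"
proof -
  let ?r = "relabel x y"
  have \<theta>: "\<And>i. i \<in> {1..n} \<Longrightarrow> \<theta> i = ?r (\<phi> i)"
    by (rule cyclic_op_one_line[OF op \<phi> assms(3)])
  have window: "bbc n \<phi> (Suc x) = y" "bbc n \<phi> y = x"
    using op xy by (auto simp: cyclic_op_def succ_idx_def)
  have "Suc x \<in> {1..n}" "x \<noteq> 0" "y \<noteq> 0"
    using xy by auto
  then obtain i where T: "map \<phi> [1..<Suc n] = map \<phi> [1..<i - 2] @ [x, y, Suc x] @ map \<phi> [Suc i..<Suc n]"
    using one_line_window[OF \<phi> _ window] by blast
  have S: "[1..<Suc n] = [1..<y] @ [y] @ [Suc y..<x] @ [x, Suc x] @ [Suc (Suc x)..<Suc n]"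
    using xy by (simp del: upt_Suc add: upt_merge)
  define S' where "S' = [1..<y] @ [y, x] @ [Suc y..<x] @ [Suc x] @ [Suc (Suc x)..<Suc n]"
  have "map ?r [1..<y] = [1..<y]"
    by (rule map_upt_id) (use xy in \<open>auto simp: relabel_def\<close>)
  moreover have "map ?r [Suc (Suc x)..<Suc n] = [Suc (Suc x)..<Suc n]"
    by (rule map_upt_id) (use xy in \<open>auto simp: relabel_def\<close>)
  moreover have "map ?r [Suc y..<x] = [Suc (Suc y)..<Suc x]"
    by (rule map_upt_shift_up) (use xy in \<open>auto simp: relabel_def\<close>)
  moreover have "?r x = Suc y" "?r (Suc x) = Suc x" "?r y = y" using xy by (auto simp: relabel_def)
  ultimately have "map ?r S' = [1..<y] @ [y, Suc y] @ [Suc (Suc y)..<Suc x] @ [Suc x] @ [Suc (Suc x)..<Suc n]"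
    unfolding S'_def by simp
  also have "\<dots> = [1..<Suc n]"
    using xy by (simp del: upt_Suc add: upt_merge)
  finally have rS: "map ?r S' = [1..<Suc n]" .
  have "set S' = {1..n}"
    using arg_cong[OF S, of set] unfolding S'_def
    by (simp only: set_append list.set set_upt atLeastLessThanSuc_atLeastAtMost) blast
  have "card (perm_solutions G n \<phi>) = card (solutions G {1..n} S' (map \<phi> [1..<Suc n]))"
    unfolding S'_def by (rule card_solutions_move_left[OF S T])
      (simp_all only: distinct_upt permutes_one_line_distinct[OF \<phi>] permutes_one_line_set[OF \<phi>]
        set_upt atLeastLessThanSuc_atLeastAtMost order_refl)
  also have "\<dots> = card (perm_solutions G n \<theta>)"
    using card_perm_solutions_relabel[OF \<phi> \<theta> rS \<open>set S' = {1..n}\<close>] by simp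
  finally show ?thesis .
qed

lemma card_perm_solutions_cyclic_op_ii_end:
  fixes \<phi> \<theta> :: "nat \<Rightarrow> nat"
  assumes op: "cyclic_op n x y \<phi> \<theta>" and \<phi>: "\<phi> permutes {1..n}" and "\<theta> permutes {1..n}"
    and "x = n" "y < x"
  shows "card (perm_solutions G n \<phi>) = card (perm_solutions G n \<theta>)"
proof -
  let ?r = "relabel n y"
  have \<theta>: "\<And>i. i \<in> {1..n} \<Longrightarrow> \<theta> i = ?r (\<phi> i)"
    using cyclic_op_one_line[OF op \<phi> assms(3)] assms(4) by simp
  have y: "y < n" and window: "\<phi> n = y" "bbc n \<phi> y = n"
    using op assms(4,5) by (auto simp: cyclic_op_def succ_idx_def bbc_def)
  have "y \<noteq> 0"
    using permutes_eq_zero_iff[OF \<phi>, of n] window(1) y by simp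
  then have T: "map \<phi> [1..<Suc n] = map \<phi> [1..<n - 1] @ [n, y]"
    using one_line_window_end[OF \<phi> window] by simp
  have S: "[1..<Suc n] = [1..<y] @ [y] @ [Suc y..<n] @ [n]"
    using y \<open>y \<noteq> 0\<close> by (simp del: upt_Suc add: upt_merge)
  define S' where "S' = [1..<y] @ [y, n] @ [Suc y..<n]"
  have "map ?r [1..<y] = [1..<y]"
    by (rule map_upt_id) (use y in \<open>auto simp: relabel_def\<close>)
  moreover have "map ?r [Suc y..<n] = [Suc (Suc y)..<Suc n]"
    by (rule map_upt_shift_up) (use y in \<open>auto simp: relabel_def\<close>)
  moreover have "?r n = Suc y" "?r y = y" using y by (auto simp: relabel_def)
  ultimately have "map ?r S' = [1..<y] @ [y, Suc y] @ [Suc (Suc y)..<Suc n]"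
    unfolding S'_def by simp
  also have "\<dots> = [1..<Suc n]"
    using y \<open>y \<noteq> 0\<close> by (simp del: upt_Suc add: upt_merge)
  finally have rS: "map ?r S' = [1..<Suc n]" .
  have "set S' = {1..n}"
    using arg_cong[OF S, of set] unfolding S'_def
    by (simp only: set_append list.set set_upt atLeastLessThanSuc_atLeastAtMost) blast
  have "card (perm_solutions G n \<phi>) = card (solutions G {1..n} S' (map \<phi> [1..<Suc n]))"
    unfolding S'_def by (rule card_solutions_move_left_from_back[OF S T])
      (simp_all only: distinct_upt permutes_one_line_distinct[OF \<phi>] permutes_one_line_set[OF \<phi>]
        set_upt atLeastLessThanSuc_atLeastAtMost order_refl)
  also have "\<dots> = card (perm_solutions G n \<theta>)"
    using card_perm_solutions_relabel[OF \<phi> \<theta> rS \<open>set S' = {1..n}\<close>] by simp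
  finally show ?thesis .
qed

lemma card_perm_solutions_cyclic_op_ii_start:
  fixes \<phi> \<theta> :: "nat \<Rightarrow> nat"
  assumes op: "cyclic_op n x y \<phi> \<theta>" and \<phi>: "\<phi> permutes {1..n}" and "\<theta> permutes {1..n}"
    and "y = 0" "y < x" "x < n"
  shows "card (perm_solutions G n \<phi>) = card (perm_solutions G n \<theta>)"
proof -
  let ?r = "relabel x 0"
  have \<theta>: "\<And>i. i \<in> {1..n} \<Longrightarrow> \<theta> i = ?r (\<phi> i)"
    using cyclic_op_one_line[OF op \<phi> assms(3)] assms(4) by simp
  have x: "0 < x" "x < n" and window: "bbc n \<phi> (Suc x) = 0" "\<phi> n = x"
    using op assms(4-6) by (auto simp: cyclic_op_def succ_idx_def bbc_def)
  have T: "map \<phi> [1..<Suc n] = [Suc x] @ map \<phi> [2..<n] @ [x]"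
    using one_line_window_wrap[OF \<phi> _ _ window] x by simp
  have S: "[1..<Suc n] = [1..<x] @ [x, Suc x] @ [Suc (Suc x)..<Suc n]"
    using x by (simp del: upt_Suc add: upt_merge)
  define S' where "S' = [x] @ [1..<x] @ [Suc x] @ [Suc (Suc x)..<Suc n]"
  have "map ?r [Suc (Suc x)..<Suc n] = [Suc (Suc x)..<Suc n]"
    by (rule map_upt_id) (use x in \<open>auto simp: relabel_def\<close>)
  moreover have "map ?r [1..<x] = [2..<Suc x]"
    unfolding numeral_2_eq_2 One_nat_def by (rule map_upt_shift_up) (use x in \<open>auto simp: relabel_def\<close>)
  moreover have "?r x = 1" "?r (Suc x) = Suc x" using x by (auto simp: relabel_def)
  ultimately have "map ?r S' = [1] @ [2..<Suc x] @ [Suc x] @ [Suc (Suc x)..<Suc n]"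
    unfolding S'_def by simp
  also have "\<dots> = [1..<Suc n]"
    using x by (simp del: upt_Suc add: upt_merge numeral_2_eq_2)
  finally have rS: "map ?r S' = [1..<Suc n]" .
  have "set S' = {1..n}"
    using arg_cong[OF S, of set] unfolding S'_def
    by (simp only: set_append list.set set_upt atLeastLessThanSuc_atLeastAtMost) blast
  have "card (perm_solutions G n \<phi>) = card (solutions G {1..n} S' (map \<phi> [1..<Suc n]))"
    unfolding S'_def by (rule card_solutions_move_to_front[OF S T])
      (simp_all only: distinct_upt permutes_one_line_distinct[OF \<phi>] permutes_one_line_set[OF \<phi>]
        set_upt atLeastLessThanSuc_atLeastAtMost order_refl)
  also have "\<dots> = card (perm_solutions G n \<theta>)"
    using card_perm_solutions_relabel[OF \<phi> \<theta> rS \<open>set S' = {1..n}\<close>] by simp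
  finally show ?thesis .
qed

end

lemma word_prod_eq_word_eval: "word_prod G n a = word_eval G a [1..<Suc n]"
  by (simp add: word_prod_def word_eval_def)

lemma word_prob_eq_card_perm_solutions:
  "word_prob G n \<phi> = real (card (perm_solutions G n \<phi>)) / real (card (carrier G)) ^ n"
  by (simp add: word_prob_def solutions_def word_prod_eq_word_eval word_eval_map comp_def)

theorem mainTheorem2:
  fixes G :: "('g, 'b) monoid_scheme" and n x y :: nat and phi theta :: "nat \<Rightarrow> nat"
  assumes "group G" and "finite (carrier G)" and "n \<ge> 1"
    and "phi permutes {1..n}" and "theta permutes {1..n}"
    and "x \<le> n" and "y \<le> n"
    and "cyclic_op n x y phi theta"
  shows "word_prob G n phi = word_prob G n theta"
proof -
  interpret group G by fact
  note op = assms(8) and perms = assms(4,5)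
  have "(x < n \<and> x + 1 < y) \<or> y < x"
    using op by (simp add: cyclic_op_def)
  then consider "x = 0" "x + 1 < y" | "0 < x" "x + 1 < y" | "x = n" "y < x"
    | "y = 0" "y < x" "x < n" | "0 < y" "y < x" "x < n"
    using assms(6) by fastforce
  then have "card (perm_solutions G n phi) = card (perm_solutions G n theta)"
  proof cases
    case 1 then show ?thesis by (rule card_perm_solutions_cyclic_op_i_start[OF op perms])
  next
    case 2 then show ?thesis by (rule card_perm_solutions_cyclic_op_i[OF op perms])
  next
    case 3 then show ?thesis by (rule card_perm_solutions_cyclic_op_ii_end[OF op perms])
  next
    case 4 then show ?thesis by (rule card_perm_solutions_cyclic_op_ii_start[OF op perms])
  next
    case 5 then show ?thesis by (rule card_perm_solutions_cyclic_op_ii[OF op perms])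
  qed
  then show ?thesis
    by (simp add: word_prob_eq_card_perm_solutions)
qed

end
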